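(* Let $p_0$ be a probability density on $\mathbb{R}^d$ and let $\boldsymbol{\phi}^\theta_t:\mathbb{R}^d\to\mathbb{R}^d$, $t\in[0,1]$, be a vector field such that: (1) there is $K_1<\infty$ with $\|\boldsymbol{\phi}^\theta_t(\mathbf{x}_1)-\boldsymbol{\phi}^\theta_t(\mathbf{x}_2)\|\le K_1\|\mathbf{x}_1-\mathbf{x}_2\|$ for all $\mathbf{x}_1,\mathbf{x}_2\in\mathbb{R}^d$, $t\in[0,1]$; (2) there is $K_2<\infty$ with $\|\boldsymbol{\phi}^\theta_{t_1}(\mathbf{x})-\boldsymbol{\phi}^\theta_{t_2}(\mathbf{x})\|\le K_2|t_2-t_1|$ for all $\mathbf{x}$ and $t_1,t_2\in[0,1]$; (3) there is $K_3<\infty$ with $\|\boldsymbol{\phi}^\theta_t(\mathbf{x})\|\le K_3$ for all $\mathbf{x}$, $t$. Let $\mathbf{x}_t$ solve $\frac{\mathrm{d}\mathbf{x}_t}{\mathrm{d}t}=\boldsymbol{\phi}^\theta_t(\mathbf{x}_t)$ with $\mathbf{x}_0\sim p_0$, so $\mathbf{x}_1=\mathbf{x}_0+\int_0^1\boldsymbol{\phi}^\theta_t(\mathbf{x}_t)\,\mathrm{d}t$, with law $p_{\mathbf{x}_1}$. Let $h=1/n$ for some $n\in\mathbb{N}$ and define $\hat{\mathbf{x}}_0\sim p_0$, $\hat{\mathbf{x}}_{(k+1)h}=\hat{\mathbf{x}}_{kh}+h\,\boldsymbol{\phi}^\theta_{kh}(\hat{\mathbf{x}}_{kh})$ for $k=0,\dots,n-1$,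 with $p_{\hat{\mathbf{x}}_1}$ the law of $\hat{\mathbf{x}}_1$. Then $$W_2^2\big(p_{\mathbf{x}_1},p_{\hat{\mathbf{x}}_1}\big)\le h\,\frac{C\big(\exp(1+K_1^2)-1\big)}{1+K_1^2},$$ where $C=\frac12K_2^2+\frac{17}{2}K_1^2K_3^2+5K_1K_2K_3$.
   Context: $W_2(p,q)=\big(\inf_{\gamma\in\Gamma(p,q)}\mathbb{E}_{(\mathbf{x},\mathbf{y})\sim\gamma}\|\mathbf{x}-\mathbf{y}\|^2\big)^{1/2}$ is the 2-Wasserstein distance, where $\Gamma(p,q)$ is the set of couplings of $p$ and $q$; $\|\cdot\|$ is the Euclidean norm. *)

theory Defs
  imports "HOL-Probability.Probability"
begin

definition couplings :: "'a::euclidean_space measure \<Rightarrow> 'a measure \<Rightarrow> ('a \<times> 'a) measure set" where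
  "couplings p q = {\<gamma>. prob_space \<gamma> \<and> sets \<gamma> = sets borel \<and>
      distr \<gamma> borel fst = p \<and> distr \<gamma> borel snd = q}"

definition W2_sq :: "'a::euclidean_space measure \<Rightarrow> 'a measure \<Rightarrow> ennreal" where
  "W2_sq p q = (INF \<gamma> \<in> couplings p q. \<integral>\<^sup>+ z. ennreal ((norm (fst z - snd z))\<^sup>2) \<partial>\<gamma>)"

fun euler :: "(real \<Rightarrow> 'a::real_normed_vector \<Rightarrow> 'a) \<Rightarrow> real \<Rightarrow> nat \<Rightarrow> 'a \<Rightarrow> 'a" where
  "euler phi h 0 x = x"
| "euler phi h (Suc k) x = (let y = euler phi h k x in y + h *\<^sub>R phi (real k * h) y)"

end

theory Submission
  imports Defs
begin

(* Couple the two laws through the common initial point x0 ~ p0: then W2^2 is at most the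
   p0-mean of |X_1(x0) - xhat_1(x0)|^2, and it suffices to bound the Euler error pointwise.
   Started on the exact solution, one Euler step of length h errs by at most
   (K2 + K1 K3) h^2 / 2 (mean value inequality), while the Lipschitz bound lets an existing
   error grow by at most a factor 1 + h K1; a discrete Gronwall argument sums these.
   Squaring and Cauchy-Schwarz turn (h * sum_j (1 + h K1)^j)^2 into a Riemann sum of
   exp((1 + K1^2) t) over [0,1].  The flow map X_1 is measurable because it is the pointwise
   limit of the Euler schemes. *)

lemma norm_diff_le_by_derivative_bound:
  fixes Y :: "real \<Rightarrow> 'a::real_normed_vector"
  assumes "a \<le> b"
    and Y': "\<And>t. t \<in> {a..b} \<Longrightarrow> (Y has_vector_derivative Y' t) (at t within {a..b})"
    and g': "\<And>t. t \<in> {a..b} \<Longrightarrow> (g has_real_derivative g' t) (at t within {a..b})"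
    and bound: "\<And>t. t \<in> {a..b} \<Longrightarrow> norm (Y' t) \<le> g' t"
  shows "norm (Y b - Y a) \<le> g b - g a"
proof (cases "a = b")
  case False
  with \<open>a \<le> b\<close> have "a < b" by simp
  have at_interior: "at t within {a..b} = at t" if "a < t" "t < b" for t
    using that by (intro at_within_Icc_at) auto
  show ?thesis
  proof (rule differentiable_bound_general[OF \<open>a < b\<close>])
    show "continuous_on {a..b} Y"
      using Y' has_vector_derivative_continuous continuous_on_eq_continuous_within by blast
    show "continuous_on {a..b} g"
      using g' DERIV_continuous continuous_on_eq_continuous_within by blast
  next
    fix t assume "a < t" "t < b"
    then show "(Y has_vector_derivative Y' t) (at t)" "(g has_vector_derivative g' t) (at t)"
      "norm (Y' t) \<le> g' t"
      using Y'[of t] g'[of t] bound[of t] at_interior[of t]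
      by (auto simp: has_real_derivative_iff_has_vector_derivative)
  qed
qed simp

lemma discrete_gronwall:
  fixes e :: "nat \<Rightarrow> real"
  assumes "e 0 = 0" and "q \<ge> 0"
    and step: "\<And>k. k < n \<Longrightarrow> e (Suc k) \<le> q * e k + D"
    and "k \<le> n"
  shows "e k \<le> D * (\<Sum>j<k. q ^ j)"
  using \<open>k \<le> n\<close>
proof (induction k)
  case 0
  then show ?case using \<open>e 0 = 0\<close> by simp
next
  case (Suc k)
  then have "e (Suc k) \<le> q * e k + D" using step by simp
  also have "\<dots> \<le> q * (D * (\<Sum>j<k. q ^ j)) + D"
    using Suc \<open>q \<ge> 0\<close> by (intro add_right_mono mult_left_mono) auto
  also have "\<dots> = D * (\<Sum>j<Suc k. q ^ j)"
    by (simp add: sum_distrib_left lessThan_Suc_eq_insert_0 sum.reindex algebra_simps)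
  finally show ?case .
qed

lemma riemann_sum_exp_le:
  fixes a h :: real
  assumes "a > 0" "h > 0"
  shows "(\<Sum>j<n. h * exp (real j * a * h)) \<le> (exp (real n * a * h) - 1) / a"
proof (induction n)
  case (Suc n)
  have "a * h \<le> exp (a * h) - 1"
    using exp_ge_add_one_self[of "a * h"] by linarith
  then have "exp (real n * a * h) * (a * h) \<le> exp (real n * a * h) * (exp (a * h) - 1)"
    by (intro mult_left_mono) auto
  then have "h * exp (real n * a * h) \<le> (exp (real (Suc n) * a * h) - exp (real n * a * h)) / a"
    using assms by (simp add: field_simps distrib_right exp_add)
  with Suc show ?case by (simp add: diff_divide_distrib)
qed simp

lemma one_plus_sq_le_exp:
  fixes h K :: real
  assumes "h \<ge> 0" "K \<ge> 0"
  shows "(1 + h * K)\<^sup>2 \<le> exp ((1 + K\<^sup>2) * h)"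
proof -
  have "(1 + h * K)\<^sup>2 \<le> (exp (h * K))\<^sup>2"
    using assms exp_ge_add_one_self[of "h * K"] by (intro power_mono) auto
  also have "\<dots> = exp (2 * K * h)"
    by (simp add: power2_eq_square flip: exp_add)
  also have "\<dots> \<le> exp ((1 + K\<^sup>2) * h)"
  proof -
    have "2 * K \<le> 1 + K\<^sup>2"
      using sum_squares_ge_zero[of "K - 1" 0] by (simp add: power2_eq_square algebra_simps)
    then show ?thesis
      using assms by (simp add: mult_right_mono)
  qed
  finally show ?thesis .
qed

lemma gronwall_factor_sq_le:
  fixes h K :: real
  assumes "h > 0" "real n * h = 1" "K \<ge> 0"
  shows "(h * (\<Sum>j<n. (1 + h * K) ^ j))\<^sup>2 \<le> (exp (1 + K\<^sup>2) - 1) / (1 + K\<^sup>2)"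
proof -
  define a where "a = 1 + K\<^sup>2"
  have "a > 0" unfolding a_def by (simp add: add_pos_nonneg)
  have "(h * (\<Sum>j<n. (1 + h * K) ^ j))\<^sup>2 \<le> h\<^sup>2 * ((\<Sum>j<n. ((1 + h * K) ^ j)\<^sup>2) * real n)"
    unfolding power_mult_distrib
    using sum_squared_le_sum_of_squares[of "\<lambda>j. (1 + h * K) ^ j" "{..<n}"]
    by (intro mult_left_mono) auto
  also have "\<dots> = (\<Sum>j<n. h * ((1 + h * K)\<^sup>2) ^ j)"
  proof -
    have "h\<^sup>2 * real n = h"
      using assms by (simp add: power2_eq_square algebra_simps)
    moreover have "((1 + h * K) ^ j)\<^sup>2 = ((1 + h * K)\<^sup>2) ^ j" for j
      by (simp flip: power_mult mult.commute)
    ultimately show ?thesis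
      by (simp add: sum_distrib_left sum_distrib_right mult.assoc[symmetric] mult.commute[of _ "real n"])
  qed
  also have "\<dots> \<le> (\<Sum>j<n. h * exp (real j * a * h))"
  proof (intro sum_mono mult_left_mono)
    fix j
    have "((1 + h * K)\<^sup>2) ^ j \<le> (exp (a * h)) ^ j"
      using one_plus_sq_le_exp[of h K] assms unfolding a_def
      by (intro power_mono) auto
    then show "((1 + h * K)\<^sup>2) ^ j \<le> exp (real j * a * h)"
      by (simp add: mult.assoc flip: exp_of_nat_mult)
  qed (use assms in simp)
  also have "\<dots> \<le> (exp (real n * a * h) - 1) / a"
    using riemann_sum_exp_le[OF \<open>a > 0\<close> \<open>h > 0\<close>] .
  also have "real n * a * h = a"
    using assms by (simp add: algebra_simps)
  finally show ?thesis unfolding a_def .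
qed

lemma W2_sq_distr_le:
  fixes F G :: "'b \<Rightarrow> 'a::euclidean_space"
  assumes P: "prob_space P"
    and [measurable]: "F \<in> borel_measurable P" "G \<in> borel_measurable P"
  shows "W2_sq (distr P borel F) (distr P borel G) \<le> (\<integral>\<^sup>+ x. ennreal ((norm (F x - G x))\<^sup>2) \<partial>P)"
proof -
  define \<gamma> where "\<gamma> = distr P borel (\<lambda>x. (F x, G x))"
  have FG: "(\<lambda>x. (F x, G x)) \<in> borel_measurable P"
    by measurable
  have fst: "fst \<in> borel_measurable (borel :: ('a \<times> 'a) measure)"
    and snd: "snd \<in> borel_measurable (borel :: ('a \<times> 'a) measure)"
    by (auto intro!: borel_measurable_continuous_onI continuous_intros)
  have "\<gamma> \<in> couplings (distr P borel F) (distr P borel G)"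
    unfolding couplings_def \<gamma>_def
    using prob_space.prob_space_distr[OF P FG]
    by (simp add: distr_distr[OF fst FG] distr_distr[OF snd FG] o_def)
  then have "W2_sq (distr P borel F) (distr P borel G)
      \<le> (\<integral>\<^sup>+ z. ennreal ((norm (fst z - snd z))\<^sup>2) \<partial>\<gamma>)"
    unfolding W2_sq_def by (rule INF_lower)
  also have "\<dots> = (\<integral>\<^sup>+ x. ennreal ((norm (F x - G x))\<^sup>2) \<partial>P)"
    unfolding \<gamma>_def
    by (subst nn_integral_distr[OF FG])
       (auto intro!: borel_measurable_continuous_onI continuous_intros)
  finally show ?thesis .
qed

locale lipschitz_bounded_field =
  fixes phi :: "real \<Rightarrow> 'a::euclidean_space \<Rightarrow> 'a" and K1 K2 K3 :: real
  assumes lip_x: "\<And>t x1 x2. t \<in> {0..1} \<Longrightarrow> norm (phi t x1 - phi t x2) \<le> K1 * norm (x1 - x2)"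
    and lip_t: "\<And>t1 t2 x. t1 \<in> {0..1} \<Longrightarrow> t2 \<in> {0..1} \<Longrightarrow>
      norm (phi t1 x - phi t2 x) \<le> K2 * \<bar>t2 - t1\<bar>"
    and bnd: "\<And>t x. t \<in> {0..1} \<Longrightarrow> norm (phi t x) \<le> K3"
begin

lemma K1_nonneg: "K1 \<ge> 0"
proof -
  obtain b :: 'a where "b \<in> Basis"
    using nonempty_Basis by blast
  then show ?thesis
    using lip_x[of 0 b 0] norm_ge_zero[of "phi 0 b - phi 0 0"] by (simp del: norm_ge_zero)
qed

lemma K2_nonneg: "K2 \<ge> 0"
  using lip_t[of 0 1 0] norm_ge_zero[of "phi 0 0 - phi 1 0"] by (simp del: norm_ge_zero)

lemma K3_nonneg: "K3 \<ge> 0"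
  using bnd[of 0 0] norm_ge_zero[of "phi 0 0"] by (simp del: norm_ge_zero)

lemma borel_measurable_phi: "t \<in> {0..1} \<Longrightarrow> phi t \<in> borel_measurable borel"
  by (intro borel_measurable_continuous_onI lipschitz_on_continuous_on[of K1] lipschitz_onI)
    (auto simp: dist_norm lip_x K1_nonneg)

lemma borel_measurable_euler:
  assumes "h \<ge> 0" "real k * h \<le> 1"
  shows "euler phi h k \<in> borel_measurable borel"
  using assms(2)
proof (induction k)
  case 0
  have "euler phi h 0 = (\<lambda>x. x)"
    by auto
  then show ?case
    by simp
next
  case (Suc k)
  then have "real k * h \<in> {0..1}"
    using \<open>h \<ge> 0\<close> by (auto intro: order_trans[OF mult_right_mono[of "real k" "real (Suc k)"]])
  with Suc have "euler phi h k \<in> borel_measurable borel"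
    "phi (real k * h) \<in> borel_measurable borel"
    by (auto simp: borel_measurable_phi)
  then show ?case
    by (simp add: Let_def)
qed

lemma solution_norm_diff_le:
  assumes Y': "\<And>t. t \<in> {a..b} \<Longrightarrow> (Y has_vector_derivative phi t (Y t)) (at t within {a..b})"
    and "0 \<le> a" "a \<le> b" "b \<le> 1"
  shows "norm (Y b - Y a) \<le> K3 * (b - a)"
proof -
  have "norm (Y b - Y a) \<le> K3 * b - K3 * a"
  proof (rule norm_diff_le_by_derivative_bound[OF \<open>a \<le> b\<close> Y'])
    fix t assume "t \<in> {a..b}"
    then show "((\<lambda>t. K3 * t) has_real_derivative K3) (at t within {a..b})"
      "norm (phi t (Y t)) \<le> K3"
      using bnd assms by (auto intro!: derivative_eq_intros)
  qed
  then show ?thesis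
    by (simp add: algebra_simps)
qed

lemma euler_local_error:
  assumes Y': "\<And>t. t \<in> {a..b} \<Longrightarrow> (Y has_vector_derivative phi t (Y t)) (at t within {a..b})"
    and "0 \<le> a" "a \<le> b" "b \<le> 1"
  shows "norm (Y b - Y a - (b - a) *\<^sub>R phi a (Y a)) \<le> (K2 + K1 * K3) / 2 * (b - a)\<^sup>2"
proof -
  define Z where "Z t = Y t - (t - a) *\<^sub>R phi a (Y a)" for t
  have "norm (Z b - Z a) \<le> (K2 + K1 * K3) / 2 * (b - a)\<^sup>2 - (K2 + K1 * K3) / 2 * (a - a)\<^sup>2"
  proof (rule norm_diff_le_by_derivative_bound[OF \<open>a \<le> b\<close>])
    fix t assume t: "t \<in> {a..b}"
    show "(Z has_vector_derivative phi t (Y t) - phi a (Y a)) (at t within {a..b})"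
      unfolding Z_def using Y'[OF t] by (auto intro!: derivative_eq_intros)
    show "((\<lambda>t. (K2 + K1 * K3) / 2 * (t - a)\<^sup>2) has_real_derivative (K2 + K1 * K3) * (t - a))
        (at t within {a..b})"
      by (auto intro!: derivative_eq_intros)
    have Y'_sub: "(Y has_vector_derivative phi s (Y s)) (at s within {a..t})" if "s \<in> {a..t}" for s
      using has_vector_derivative_within_subset[OF Y'[of s], of "{a..t}"] that t by auto
    have "norm (phi t (Y t) - phi a (Y a))
        \<le> norm (phi t (Y t) - phi a (Y t)) + norm (phi a (Y t) - phi a (Y a))"
      by (rule norm_diff_triangle_le[of _ "phi a (Y t)"]) simp_all
    also have "\<dots> \<le> K2 * (t - a) + K1 * (K3 * (t - a))"
    proof (rule add_mono)
      show "norm (phi t (Y t) - phi a (Y t)) \<le> K2 * (t - a)"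
        using lip_t[of t a "Y t"] t assms by auto
      have "norm (phi a (Y t) - phi a (Y a)) \<le> K1 * norm (Y t - Y a)"
        using lip_x[of a "Y t" "Y a"] assms by auto
      also have "\<dots> \<le> K1 * (K3 * (t - a))"
        using solution_norm_diff_le[OF Y'_sub] t assms K1_nonneg
        by (intro mult_left_mono) auto
      finally show "norm (phi a (Y t) - phi a (Y a)) \<le> K1 * (K3 * (t - a))" .
    qed
    finally show "norm (phi t (Y t) - phi a (Y a)) \<le> (K2 + K1 * K3) * (t - a)"
      by (simp add: algebra_simps)
  qed
  then show ?thesis
    unfolding Z_def by (simp add: algebra_simps)
qed

lemma euler_global_error_le:
  assumes Y': "\<And>t. t \<in> {0..1} \<Longrightarrow> (Y has_vector_derivative phi t (Y t)) (at t within {0..1})"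
    and "h > 0" "real n * h = 1"
  shows "norm (Y 1 - euler phi h n (Y 0))
    \<le> h * ((K2 + K1 * K3) / 2) * (h * (\<Sum>j<n. (1 + h * K1) ^ j))"
proof -
  define M where "M = (K2 + K1 * K3) / 2"
  define e where "e k = norm (Y (real k * h) - euler phi h k (Y 0))" for k
  have "e (Suc k) \<le> (1 + h * K1) * e k + h\<^sup>2 * M" if "k < n" for k
  proof -
    define s where "s = real k * h"
    define y where "y = euler phi h k (Y 0)"
    have "0 \<le> s"
      unfolding s_def using \<open>h > 0\<close> by simp
    have "real (Suc k) * h \<le> real n * h"
      using \<open>k < n\<close> \<open>h > 0\<close> by (intro mult_right_mono) auto
    then have "s + h \<le> 1"
      unfolding s_def using assms by (simp add: algebra_simps)
    have "(Y has_vector_derivative phi t (Y t)) (at t within {s..s + h})" if "t \<in> {s..s + h}" for t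
      using has_vector_derivative_within_subset[OF Y'[of t], of "{s..s + h}"] that \<open>0 \<le> s\<close> \<open>s + h \<le> 1\<close>
      by auto
    then have local: "norm (Y (s + h) - Y s - h *\<^sub>R phi s (Y s)) \<le> M * h\<^sup>2"
      using euler_local_error[of s "s + h" Y] \<open>0 \<le> s\<close> \<open>s + h \<le> 1\<close> \<open>h > 0\<close>
      unfolding M_def by simp
    have propagated: "norm (h *\<^sub>R (phi s (Y s) - phi s y)) \<le> h * (K1 * e k)"
      using lip_x[of s "Y s" y] \<open>0 \<le> s\<close> \<open>s + h \<le> 1\<close> \<open>h > 0\<close>
      unfolding e_def s_def y_def by (simp add: mult_left_mono)
    have "e (Suc k) = norm ((Y (s + h) - Y s - h *\<^sub>R phi s (Y s)) + (Y s - y)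
        + h *\<^sub>R (phi s (Y s) - phi s y))"
      unfolding e_def s_def y_def by (simp add: Let_def algebra_simps)
    also have "\<dots> \<le> M * h\<^sup>2 + e k + h * (K1 * e k)"
      using local propagated unfolding e_def s_def y_def
      by (smt (verit) norm_triangle_ineq)
    finally show ?thesis
      by (simp add: algebra_simps)
  qed
  then have "e n \<le> h\<^sup>2 * M * (\<Sum>j<n. (1 + h * K1) ^ j)"
    using discrete_gronwall[of e "1 + h * K1" n] \<open>h > 0\<close> K1_nonneg
    by (simp add: e_def)
  then show ?thesis
    using assms unfolding e_def M_def by (simp add: power2_eq_square algebra_simps)
qed

lemma euler_error_le:
  assumes Y': "\<And>t. t \<in> {0..1} \<Longrightarrow> (Y has_vector_derivative phi t (Y t)) (at t within {0..1})"
    and "n \<ge> 1"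
  shows "norm (Y 1 - euler phi (1 / real n) n (Y 0))
    \<le> 1 / real n * ((K2 + K1 * K3) / 2 * sqrt ((exp (1 + K1\<^sup>2) - 1) / (1 + K1\<^sup>2)))"
proof -
  define h where "h = 1 / real n"
  have "h > 0" "real n * h = 1"
    unfolding h_def using \<open>n \<ge> 1\<close> by auto
  have "h * (\<Sum>j<n. (1 + h * K1) ^ j) \<le> sqrt ((exp (1 + K1\<^sup>2) - 1) / (1 + K1\<^sup>2))"
    using gronwall_factor_sq_le[OF \<open>h > 0\<close> \<open>real n * h = 1\<close> K1_nonneg] by (rule real_le_rsqrt)
  then have "h * ((K2 + K1 * K3) / 2) * (h * (\<Sum>j<n. (1 + h * K1) ^ j))
      \<le> h * ((K2 + K1 * K3) / 2) * sqrt ((exp (1 + K1\<^sup>2) - 1) / (1 + K1\<^sup>2))"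
    using \<open>h > 0\<close> K1_nonneg K2_nonneg K3_nonneg by (intro mult_left_mono) auto
  then show ?thesis
    using euler_global_error_le[OF Y' \<open>h > 0\<close> \<open>real n * h = 1\<close>] unfolding h_def by simp
qed

lemma euler_tendsto_solution:
  assumes Y': "\<And>t. t \<in> {0..1} \<Longrightarrow> (Y has_vector_derivative phi t (Y t)) (at t within {0..1})"
  shows "(\<lambda>m. euler phi (1 / real m) m (Y 0)) \<longlonglongrightarrow> Y 1"
proof -
  define c where "c = (K2 + K1 * K3) / 2 * sqrt ((exp (1 + K1\<^sup>2) - 1) / (1 + K1\<^sup>2))"
  have "\<forall>\<^sub>F m in sequentially. norm (euler phi (1 / real m) m (Y 0) - Y 1) \<le> c / real m"
  proof (rule eventually_sequentiallyI)
    fix m :: nat assume "m \<ge> 1"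
    have "norm (Y 1 - euler phi (1 / real m) m (Y 0)) \<le> 1 / real m * c"
      unfolding c_def by (rule euler_error_le[OF Y' \<open>m \<ge> 1\<close>])
    then show "norm (euler phi (1 / real m) m (Y 0) - Y 1) \<le> c / real m"
      by (simp add: norm_minus_commute)
  qed
  then have "(\<lambda>m. euler phi (1 / real m) m (Y 0) - Y 1) \<longlonglongrightarrow> 0"
    by (rule Lim_null_comparison) (rule lim_const_over_n)
  then show ?thesis
    by (rule LIM_zero_cancel)
qed

lemma borel_measurable_solution_endpoint:
  assumes "\<And>x. X 0 x = x"
    and "\<And>x t. t \<in> {0..1} \<Longrightarrow> ((\<lambda>s. X s x) has_vector_derivative phi t (X t x)) (at t within {0..1})"
  shows "X 1 \<in> borel_measurable borel"
proof (rule borel_measurable_LIMSEQ_metric)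
  show "euler phi (1 / real m) m \<in> borel_measurable borel" for m
    by (rule borel_measurable_euler) auto
  show "(\<lambda>m. euler phi (1 / real m) m x) \<longlonglongrightarrow> X 1 x" for x
    using euler_tendsto_solution[of "\<lambda>s. X s x"] assms by simp
qed

(* The paper's constant C dominates ((K2 + K1 K3) / 2)^2, and the error bound of order h^2
   from euler_error_le is only used in the weaker form of order h. *)
lemma euler_error_sq_le:
  assumes Y': "\<And>t. t \<in> {0..1} \<Longrightarrow> (Y has_vector_derivative phi t (Y t)) (at t within {0..1})"
    and "n \<ge> 1"
  shows "(norm (Y 1 - euler phi (1 / real n) n (Y 0)))\<^sup>2
    \<le> 1 / real n * ((1/2 * K2\<^sup>2 + 17/2 * K1\<^sup>2 * K3\<^sup>2 + 5 * K1 * K2 * K3)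
      * (exp (1 + K1\<^sup>2) - 1) / (1 + K1\<^sup>2))"
proof -
  define h where "h = 1 / real n"
  define M where "M = (K2 + K1 * K3) / 2"
  define C where "C = 1/2 * K2\<^sup>2 + 17/2 * K1\<^sup>2 * K3\<^sup>2 + 5 * K1 * K2 * K3"
  define G where "G = (exp (1 + K1\<^sup>2) - 1) / (1 + K1\<^sup>2)"
  have "0 < h" "h \<le> 1"
    unfolding h_def using \<open>n \<ge> 1\<close> by auto
  have "G \<ge> 0"
    unfolding G_def by (intro divide_nonneg_pos) (auto simp: add_pos_nonneg)
  have "M \<ge> 0" "M\<^sup>2 \<le> C"
    unfolding M_def C_def using K1_nonneg K2_nonneg K3_nonneg
    by (auto simp: power2_eq_square field_simps)
  have "norm (Y 1 - euler phi h n (Y 0)) \<le> h * (M * sqrt G)"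
    unfolding h_def M_def G_def by (rule euler_error_le[OF Y' \<open>n \<ge> 1\<close>])
  then have "(norm (Y 1 - euler phi h n (Y 0)))\<^sup>2 \<le> (h * (M * sqrt G))\<^sup>2"
    by (intro power_mono) auto
  also have "\<dots> = h * h * M\<^sup>2 * G"
    using \<open>G \<ge> 0\<close> by (simp add: power_mult_distrib power2_eq_square)
  also have "\<dots> \<le> h * 1 * C * G"
    using \<open>0 < h\<close> \<open>h \<le> 1\<close> \<open>M\<^sup>2 \<le> C\<close> \<open>G \<ge> 0\<close>
    by (intro mult_right_mono mult_mono) auto
  finally show ?thesis
    unfolding h_def C_def G_def by simp
qed

end

theorem lemmaD3:
  fixes f :: "'a::euclidean_space \<Rightarrow> real"
    and phi :: "real \<Rightarrow> 'a \<Rightarrow> 'a"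
    and X :: "real \<Rightarrow> 'a \<Rightarrow> 'a"
    and K1 K2 K3 :: real
    and n :: nat
  assumes f_meas: "f \<in> borel_measurable borel"
    and f_nonneg: "\<And>x. f x \<ge> 0"
    and f_int: "(\<integral>\<^sup>+ x. ennreal (f x) \<partial>lborel) = 1"
    and lip_x: "\<And>t x1 x2. t \<in> {0..1} \<Longrightarrow> norm (phi t x1 - phi t x2) \<le> K1 * norm (x1 - x2)"
    and lip_t: "\<And>t1 t2 x. t1 \<in> {0..1} \<Longrightarrow> t2 \<in> {0..1} \<Longrightarrow> norm (phi t1 x - phi t2 x) \<le> K2 * \<bar>t2 - t1\<bar>"
    and bnd: "\<And>t x. t \<in> {0..1} \<Longrightarrow> norm (phi t x) \<le> K3"
    and X0: "\<And>x0. X 0 x0 = x0"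
    and X_ode: "\<And>x0 t. t \<in> {0..1} \<Longrightarrow>
        ((\<lambda>s. X s x0) has_vector_derivative phi t (X t x0)) (at t within {0..1})"
    and n_pos: "n \<ge> 1"
  shows "W2_sq (distr (density lborel f) borel (X 1))
               (distr (density lborel f) borel (euler phi (1 / real n) n))
         \<le> ennreal ((1 / real n) *
              ((1/2 * K2\<^sup>2 + 17/2 * K1\<^sup>2 * K3\<^sup>2 + 5 * K1 * K2 * K3) * (exp (1 + K1\<^sup>2) - 1)
               / (1 + K1\<^sup>2)))"
proof -
  interpret lipschitz_bounded_field phi K1 K2 K3
    using lip_x lip_t bnd by unfold_locales
  let ?P = "density lborel f"
  let ?B = "1 / real n * ((1/2 * K2\<^sup>2 + 17/2 * K1\<^sup>2 * K3\<^sup>2 + 5 * K1 * K2 * K3)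
    * (exp (1 + K1\<^sup>2) - 1) / (1 + K1\<^sup>2))"
  have "prob_space ?P"
    using f_meas f_int by (intro prob_spaceI) (subst emeasure_density; simp)
  moreover have "X 1 \<in> borel_measurable ?P"
    using borel_measurable_solution_endpoint[OF X0 X_ode] by simp
  moreover have "euler phi (1 / real n) n \<in> borel_measurable ?P"
    using borel_measurable_euler[of "1 / real n" n] by simp
  ultimately have "W2_sq (distr ?P borel (X 1)) (distr ?P borel (euler phi (1 / real n) n))
      \<le> (\<integral>\<^sup>+ x. ennreal ((norm (X 1 x - euler phi (1 / real n) n x))\<^sup>2) \<partial>?P)"
    by (rule W2_sq_distr_le)
  also have "\<dots> \<le> (\<integral>\<^sup>+ x. ennreal ?B \<partial>?P)"
    using euler_error_sq_le[of "\<lambda>s. X s _", OF X_ode n_pos]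
    by (intro nn_integral_mono ennreal_leI) (simp add: X0)
  also have "\<dots> = ennreal ?B"
    using prob_space.emeasure_space_1[OF \<open>prob_space ?P\<close>] by simp
  finally show ?thesis .
qed

end
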